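(* Let $W \in \mathbb{R}^{m \times n}$ have full rank, $\mathrm{rank}(W) = \min(m,n)$. For a parameterized map $\theta \mapsto f_\theta(W) \in \mathbb{R}^{m\times n}$ define its rank capacity $$\mathcal{R}(f_\theta; W) = \max_\theta \mathrm{rank}(f_\theta(W)) - \min_\theta \mathrm{rank}(f_\theta(W)).$$ (Column-sliced form.) Suppose $n = n_0 n_1$ and write $W = [W_1, \dots, W_{n_1}]$ with $W_i \in \mathbb{R}^{m \times n_0}$. For each $i$ let $W_i = P_i Q_i$ be a full-rank factorization with $P_i \in \mathbb{R}^{m \times r_c}$, $Q_i \in \mathbb{R}^{r_c \times n_0}$, $r_c = \min(m, n_0)$. Keep the $P_i$ fixed, let $\theta = (\widetilde Q_1, \dots, \widetilde Q_{n_1})$ range over all tuples of arbitrary matrices $\widetilde Q_i \in \mathbb{R}^{r_c \times n_0}$, and set $f_\theta(W) = [P_1 \widetilde Q_1, \dots, P_{n_1}\widetilde Q_{n_1}]$. Then $\mathcal{R}(f_\theta; W) = \mathrm{rank}([P_1, \dots, P_{n_1}])$. In particular, if $m \le n$ then $\mathcal{R}(f_\theta; W) = m$. (Row-sliced form.) Suppose $m = m_0 m_1$ and write $W$ as the vertical stack of blocks $W_1, \dots, W_{m_1}$ with $W_j \in \mathbb{R}^{m_0 \times n}$. For each $j$ let $W_j = U_j V_j$ be a full-rank factorization with $U_j \in \mathbb{R}^{m_0 \times r_r}$, $V_j \in \mathbb{R}^{r_r \times n}$, $r_r = \min(m_0, n)$. Keep the $V_j$ fixed, let $\phi = (\widetilde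 U_1,\dots,\widetilde U_{m_1})$ range over all tuples of arbitrary matrices $\widetilde U_j \in \mathbb{R}^{m_0 \times r_r}$, and let $g_\phi(W)$ be the vertical stack of $\widetilde U_1 V_1, \dots, \widetilde U_{m_1} V_{m_1}$. Then $\mathcal{R}(g_\phi; W) = \mathrm{rank}([V_1^\top, \dots, V_{m_1}^\top])$. In particular, if $n \le m$ then $\mathcal{R}(g_\phi; W) = n$.
   Context: A full-rank factorization $A = PQ$ of an $a\times b$ matrix with inner dimension $r=\min(a,b)$ is any such product factorization (e.g. obtained from an SVD); $[A_1,\dots,A_s]$ denotes horizontal concatenation. *)

theory Defs
  imports "Jordan_Normal_Form.DL_Rank"
begin

definition mrank :: "real mat \<Rightarrow> nat" where
  "mrank A = vec_space.rank (dim_row A) A"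

definition hcat :: "nat \<Rightarrow> nat \<Rightarrow> nat \<Rightarrow> (nat \<Rightarrow> 'a mat) \<Rightarrow> 'a mat" where
  "hcat r c k B = mat r (k * c) (\<lambda>(i, j). B (j div c) $$ (i, j mod c))"

definition vcat :: "nat \<Rightarrow> nat \<Rightarrow> nat \<Rightarrow> (nat \<Rightarrow> 'a mat) \<Rightarrow> 'a mat" where
  "vcat r c k B = mat (k * r) c (\<lambda>(i, j). B (i div r) $$ (i mod r, j))"

text \<open>The i-th (0-based) column block of width c, and the j-th row block of height r.\<close>
definition col_block :: "'a mat \<Rightarrow> nat \<Rightarrow> nat \<Rightarrow> 'a mat" where
  "col_block W c i = mat (dim_row W) c (\<lambda>(a, b). W $$ (a, i * c + b))"

definition row_block :: "'a mat \<Rightarrow> nat \<Rightarrow> nat \<Rightarrow> 'a mat" where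
  "row_block W r j = mat r (dim_col W) (\<lambda>(a, b). W $$ (j * r + a, b))"

definition rank_capacity :: "('p \<Rightarrow> real mat) \<Rightarrow> 'p set \<Rightarrow> nat" where
  "rank_capacity f \<Theta> = Max ((\<lambda>\<theta>. mrank (f \<theta>)) ` \<Theta>) - Min ((\<lambda>\<theta>. mrank (f \<theta>)) ` \<Theta>)"

end

theory Submission
  imports Defs
begin

(* Every column of [P_1 Q'_1, ..., P_s Q'_s] is a combination of columns of one P_i, so its rank
   is at most rank [P_1, ..., P_s]. The bound is attained when every Q'_i has a right inverse,
   which exists because r_c = min m n_0 <= n_0, and rank 0 is attained at Q' = 0; hence the
   capacity is rank [P_1, ..., P_s]. For m <= n the columns of W = [P_1 Q_1, ..., P_s Q_s] lie in
   the same column space, so full rank of W forces rank [P_1, ..., P_s] = m. The row-sliced form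
   is the column-sliced form for the transpose of W, as transposition preserves rank. *)

context vec_space
begin

lemma rank_le_if_col_space_subset:
  assumes A: "A \<in> carrier_mat n na" and B: "B \<in> carrier_mat n nb"
    and sub: "col_space B \<subseteq> col_space A"
  shows "rank B \<le> rank A"
proof -
  have sA: "subspace class_ring (col_space A) V" and sB: "subspace class_ring (col_space B) V"
    unfolding col_space_def using A B cols_dim span_is_subspace by auto
  have "subspace class_ring (col_space B) (vs (col_space A))"
    using nested_subspaces[OF sA sB sub] .
  moreover have "vectorspace.fin_dim class_ring (vs (col_space A))"
    "vectorspace.fin_dim class_ring (vs (col_space B))"
    using fin_dim_span_cols[OF A] fin_dim_span_cols[OF B] unfolding col_space_def .
  ultimately show ?thesis
    using vectorspace.subspace_dim[OF subspace_is_vs[OF sA]]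
    unfolding rank_def col_space_def by simp
qed

lemma col_space_mult_subset:
  assumes A: "A \<in> carrier_mat n k" and X: "X \<in> carrier_mat k c"
  shows "col_space (A * X) \<subseteq> col_space A"
proof
  fix y assume "y \<in> col_space (A * X)"
  then obtain x where x: "x \<in> carrier_vec c" and y: "y = A * X *\<^sub>v x"
    using col_space_eq[of "A * X" c] A X by auto
  have "y = A *\<^sub>v (X *\<^sub>v x)" using y assoc_mult_mat_vec[OF A X x] by simp
  moreover have "X *\<^sub>v x \<in> carrier_vec k" using X x by simp
  ultimately show "y \<in> col_space A" using col_space_eq[OF A] A by auto
qed

lemma rank_mult_le:
  assumes "A \<in> carrier_mat n k" and "X \<in> carrier_mat k c"
  shows "rank (A * X) \<le> rank A"
  using assms by (intro rank_le_if_col_space_subset col_space_mult_subset) auto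

lemma rank_factorization:
  assumes A: "A \<in> carrier_mat n nc"
  obtains C X where "C \<in> carrier_mat n (rank A)" and "X \<in> carrier_mat (rank A) nc"
    and "A = C * X"
proof -
  have colsA: "set (cols A) \<subseteq> carrier_vec n" using A cols_dim[of A] by auto
  have sub: "subspace class_ring (col_space A) V" and submod: "submodule class_ring (col_space A) V"
    unfolding col_space_def using colsA span_is_subspace span_is_submodule by auto
  have vs: "vectorspace class_ring (vs (col_space A))" using subspace_is_vs[OF sub] .
  obtain B where "finite B" and basis: "vectorspace.basis class_ring (vs (col_space A)) B"
    using vectorspace.finite_basis_exists[OF vs] fin_dim_span_cols[OF A]
    unfolding col_space_def by blast
  have card: "card B = rank A"
    using vectorspace.dim_basis[OF vs \<open>finite B\<close> basis] unfolding rank_def col_space_def by simp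
  have BA: "B \<subseteq> col_space A"
    and "LinearCombinations.module.span class_ring (vs (col_space A)) B = col_space A"
    using basis unfolding vectorspace.basis_def[OF vs] by auto
  then have spanB: "span B = col_space A" using span_li_not_depend(1)[OF _ submod] by simp
  have BV: "B \<subseteq> carrier_vec n" using BA sub unfolding subspace_def submodule_def by auto
  obtain xs where xs: "set xs = B" "distinct xs" using finite_distinct_list[OF \<open>finite B\<close>] by blast
  define C where "C = mat_of_cols n xs"
  have C: "C \<in> carrier_mat n (rank A)"
    unfolding C_def using xs card distinct_card by fastforce
  have colC: "col_space C = col_space A"
    unfolding C_def using xs BV spanB by (simp add: col_space_def cols_mat_of_cols)
  have "\<forall>j<nc. \<exists>x. x \<in> carrier_vec (rank A) \<and> col A j = C *\<^sub>v x"
  proof (intro allI impI)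
    fix j assume "j < nc"
    then have "col A j \<in> col_space A"
      using A in_own_span[OF colsA] unfolding col_space_def by (auto simp: cols_def)
    then show "\<exists>x. x \<in> carrier_vec (rank A) \<and> col A j = C *\<^sub>v x"
      using col_space_eq[OF C] C colC by auto
  qed
  then obtain x where x: "\<And>j. j < nc \<Longrightarrow> x j \<in> carrier_vec (rank A) \<and> col A j = C *\<^sub>v x j"
    by metis
  define X where "X = mat_of_cols (rank A) (map x [0..<nc])"
  have X: "X \<in> carrier_mat (rank A) nc" unfolding X_def by auto
  have "A = C * X"
    by (rule mat_col_eqI) (use A C X x in \<open>auto simp: X_def\<close>)
  with C X that show ?thesis by blast
qed

lemma rank_transpose_le:
  assumes A: "A \<in> carrier_mat n nc"
  shows "vec_space.rank nc (transpose_mat A) \<le> rank A"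
proof -
  obtain C X where C: "C \<in> carrier_mat n (rank A)" and X: "X \<in> carrier_mat (rank A) nc"
    and "A = C * X" using rank_factorization[OF A] .
  then have "transpose_mat A = transpose_mat X * transpose_mat C" using transpose_mult by simp
  then have "vec_space.rank nc (transpose_mat A) \<le> vec_space.rank nc (transpose_mat X)"
    using vec_space.rank_mult_le[of "transpose_mat X" nc "rank A" "transpose_mat C" n] C X by simp
  also have "\<dots> \<le> rank A" using vec_space.rank_le_nc[of "transpose_mat X" nc "rank A"] X by simp
  finally show ?thesis .
qed

end

lemma right_invertible_mat_exists:
  assumes "r \<le> c"
  obtains X Y :: "'a :: comm_ring_1 mat"
  where "X \<in> carrier_mat r c" and "Y \<in> carrier_mat c r" and "X * Y = 1\<^sub>m r"
proof
  let ?X = "mat r c (\<lambda>(a, b). if a = b then 1 else 0) :: 'a mat"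
  show "?X \<in> carrier_mat r c" "transpose_mat ?X \<in> carrier_mat c r" by auto
  have row: "row ?X a = unit_vec c a" if "a < r" for a
    using that assms by (intro eq_vecI) (auto simp: unit_vec_def)
  show "?X * transpose_mat ?X = 1\<^sub>m r"
  proof (rule eq_matI)
    fix a b assume "a < dim_row (1\<^sub>m r :: 'a mat)" "b < dim_col (1\<^sub>m r :: 'a mat)"
    then have "a < r" "b < r" by simp_all
    then show "(?X * transpose_mat ?X) $$ (a, b) = 1\<^sub>m r $$ (a, b)"
      using row assms by (simp add: scalar_prod_left_unit)
  qed simp_all
qed

lemma block_index_less:
  fixes i d k c :: nat
  assumes "i < k" "d < c"
  shows "i * c + d < k * c"
proof -
  have "(i + 1) * c \<le> k * c" using assms(1) by (intro mult_le_mono1) simp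
  then show ?thesis using assms(2) by simp
qed

lemma block_index_bounds:
  fixes j k c :: nat
  assumes "j < k * c"
  shows "j div c < k" and "j mod c < c"
proof -
  have "c \<noteq> 0" using assms by (rule contrapos_pn) simp
  then show "j div c < k" "j mod c < c" using assms by (simp_all add: less_mult_imp_div_less)
qed

lemma hcat_carrier: "hcat r c k B \<in> carrier_mat r (k * c)"
  unfolding hcat_def by simp

lemma hcat_cong: "(\<And>i. i < k \<Longrightarrow> B i = B' i) \<Longrightarrow> hcat r c k B = hcat r c k B'"
  unfolding hcat_def by (intro cong_mat) (auto simp: less_mult_imp_div_less)

lemma hcat_zero: "hcat r c k (\<lambda>_. 0\<^sub>m r c) = 0\<^sub>m r (k * c)"
  unfolding hcat_def by (intro eq_matI) (auto simp: block_index_bounds)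

lemma col_hcat:
  assumes "\<And>i. i < k \<Longrightarrow> B i \<in> carrier_mat r c" and "j < k * c"
  shows "col (hcat r c k B) j = col (B (j div c)) (j mod c)"
  using assms(2) assms(1)[OF block_index_bounds(1)[OF assms(2)]]
  unfolding hcat_def col_def by (intro eq_vecI) auto

lemma set_cols_hcat:
  assumes "\<And>i. i < k \<Longrightarrow> B i \<in> carrier_mat r c"
  shows "set (cols (hcat r c k B)) = (\<Union>i<k. set (cols (B i)))"
proof (intro equalityI subsetI)
  fix v assume "v \<in> set (cols (hcat r c k B))"
  then obtain j where j: "j < k * c" and v: "v = col (hcat r c k B) j"
    using hcat_carrier[of r c k B] by (auto simp: cols_def)
  have "j div c < k" "j mod c < c" using block_index_bounds[OF j] .
  moreover have "v = col (B (j div c)) (j mod c)"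
    using v col_hcat[OF assms j] by simp
  ultimately show "v \<in> (\<Union>i<k. set (cols (B i)))"
    using assms[of "j div c"] by (auto simp: cols_def intro!: bexI[of _ "j div c"])
next
  fix v assume "v \<in> (\<Union>i<k. set (cols (B i)))"
  then obtain i where i: "i < k" and "v \<in> set (cols (B i))" by blast
  then obtain d where d: "d < c" and v: "v = col (B i) d"
    using assms[OF i] by (auto simp: cols_def)
  have "v = col (hcat r c k B) (i * c + d)"
    using v col_hcat[OF assms block_index_less[OF i d]] d by simp
  then show "v \<in> set (cols (hcat r c k B))"
    using block_index_less[OF i d] hcat_carrier[of r c k B] by (auto simp: cols_def)
qed

lemma hcat_col_block: "W \<in> carrier_mat r (k * c) \<Longrightarrow> hcat r c k (col_block W c) = W"
  unfolding hcat_def col_block_def by (intro eq_matI) (auto simp: block_index_bounds)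

lemma transpose_vcat:
  assumes "\<And>i. i < k \<Longrightarrow> B i \<in> carrier_mat r c"
  shows "transpose_mat (vcat r c k B) = hcat c r k (\<lambda>i. transpose_mat (B i))"
proof (rule eq_matI)
  fix i j assume "i < dim_row (hcat c r k (\<lambda>i. (B i)\<^sup>T))" "j < dim_col (hcat c r k (\<lambda>i. (B i)\<^sup>T))"
  then have i: "i < c" and j: "j < k * r" by (simp_all add: hcat_def)
  have "B (j div r) \<in> carrier_mat r c" using assms block_index_bounds[OF j] by simp
  then show "(vcat r c k B)\<^sup>T $$ (i, j) = hcat c r k (\<lambda>i. (B i)\<^sup>T) $$ (i, j)"
    using i j block_index_bounds[OF j] by (simp add: hcat_def vcat_def)
qed (simp_all add: hcat_def vcat_def)

lemma transpose_row_block: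
  assumes "W \<in> carrier_mat (k * r) c" "j < k"
  shows "transpose_mat (row_block W r j) = col_block (transpose_mat W) r j"
  unfolding row_block_def col_block_def using assms block_index_less[OF assms(2)]
  by (intro eq_matI) auto

context vec_space
begin

lemma col_space_hcat_mult_subset:
  assumes A: "\<And>i. i < k \<Longrightarrow> A i \<in> carrier_mat n r"
    and X: "\<And>i. i < k \<Longrightarrow> X i \<in> carrier_mat r c"
  shows "col_space (hcat n c k (\<lambda>i. A i * X i)) \<subseteq> col_space (hcat n r k A)"
proof -
  have AX: "A i * X i \<in> carrier_mat n c" if "i < k" for i
    using A[OF that] X[OF that] by (rule mult_carrier_mat)
  have cols_AX: "set (cols (hcat n c k (\<lambda>i. A i * X i))) = (\<Union>i<k. set (cols (A i * X i)))"
    by (rule set_cols_hcat) (rule AX)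
  have cols_A: "set (cols (hcat n r k A)) = (\<Union>i<k. set (cols (A i)))"
    by (rule set_cols_hcat) (rule A)
  have "set (cols (hcat n c k (\<lambda>i. A i * X i))) \<subseteq> col_space (hcat n r k A)"
  proof
    fix v assume "v \<in> set (cols (hcat n c k (\<lambda>i. A i * X i)))"
    then obtain i where i: "i < k" and v: "v \<in> set (cols (A i * X i))"
      unfolding cols_AX by blast
    have "set (cols (A i * X i)) \<subseteq> carrier_vec n"
      using cols_dim[of "A i * X i"] carrier_matD(1)[OF AX[OF i]] by simp
    then have "v \<in> col_space (A i * X i)"
      unfolding col_space_def using v in_own_span by blast
    also have "\<dots> \<subseteq> col_space (A i)" by (rule col_space_mult_subset[OF A[OF i] X[OF i]])
    also have "\<dots> \<subseteq> col_space (hcat n r k A)"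
      unfolding col_space_def cols_A using i by (intro span_is_monotone) blast
    finally show "v \<in> col_space (hcat n r k A)" .
  qed
  moreover have "set (cols (hcat n r k A)) \<subseteq> carrier_vec n"
    using cols_dim[of "hcat n r k A"] hcat_carrier[of n r k A] by simp
  then have "submodule class_ring (col_space (hcat n r k A)) V"
    unfolding col_space_def by (rule span_is_submodule)
  ultimately show ?thesis
    unfolding col_space_def[of "hcat n c k (\<lambda>i. A i * X i)"] by (rule span_is_subset)
qed

lemma rank_hcat_mult_le:
  assumes "\<And>i. i < k \<Longrightarrow> A i \<in> carrier_mat n r" and "\<And>i. i < k \<Longrightarrow> X i \<in> carrier_mat r c"
  shows "rank (hcat n c k (\<lambda>i. A i * X i)) \<le> rank (hcat n r k A)"
  by (rule rank_le_if_col_space_subset[OF hcat_carrier hcat_carrier col_space_hcat_mult_subset[OF assms]])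

lemma rank_hcat_mult_right_invertible:
  assumes A: "\<And>i. i < k \<Longrightarrow> A i \<in> carrier_mat n r" and X: "\<And>i. i < k \<Longrightarrow> X i \<in> carrier_mat r c"
    and Y: "\<And>i. i < k \<Longrightarrow> Y i \<in> carrier_mat c r" and XY: "\<And>i. i < k \<Longrightarrow> X i * Y i = 1\<^sub>m r"
  shows "rank (hcat n c k (\<lambda>i. A i * X i)) = rank (hcat n r k A)"
proof (rule antisym)
  show "rank (hcat n c k (\<lambda>i. A i * X i)) \<le> rank (hcat n r k A)"
    by (rule rank_hcat_mult_le[OF A X])
  have AX: "A i * X i \<in> carrier_mat n c" if "i < k" for i
    using A[OF that] X[OF that] by (rule mult_carrier_mat)
  have "A i * X i * Y i = A i" if "i < k" for i
    using assoc_mult_mat[OF A[OF that] X[OF that] Y[OF that]] XY[OF that] A[OF that] by simp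
  then have "hcat n r k A = hcat n r k (\<lambda>i. A i * X i * Y i)"
    by (intro hcat_cong) simp
  also have "rank \<dots> \<le> rank (hcat n c k (\<lambda>i. A i * X i))"
    using AX Y by (rule rank_hcat_mult_le)
  finally show "rank (hcat n r k A) \<le> rank (hcat n c k (\<lambda>i. A i * X i))" .
qed

end

lemma mrank_transpose: "mrank (transpose_mat A) = mrank A"
  using vec_space.rank_transpose_le[of A "dim_row A" "dim_col A"]
    vec_space.rank_transpose_le[of "transpose_mat A" "dim_col A" "dim_row A"]
  unfolding mrank_def by simp

lemma mrank_le_dim_row: "mrank A \<le> dim_row A"
  using vec_space.rank_le_nc[of "transpose_mat A" "dim_col A" "dim_row A"] mrank_transpose[of A]
  unfolding mrank_def by simp

lemma mrank_zero: "mrank (0\<^sub>m r c) = 0"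
  unfolding mrank_def using vec_space.rank_0I[of r c] by simp

lemma mrank_hcat_eq_rank: "mrank (hcat r c k B) = vec_space.rank r (hcat r c k B)"
  unfolding mrank_def hcat_def by simp

lemma rank_capacity_eqI:
  assumes "\<And>\<theta>. \<theta> \<in> \<Theta> \<Longrightarrow> mrank (f \<theta>) \<le> M"
    and "\<theta>\<^sub>1 \<in> \<Theta>" "mrank (f \<theta>\<^sub>1) = M"
    and "\<theta>\<^sub>0 \<in> \<Theta>" "mrank (f \<theta>\<^sub>0) = 0"
  shows "rank_capacity f \<Theta> = M"
proof -
  let ?R = "(\<lambda>\<theta>. mrank (f \<theta>)) ` \<Theta>"
  have "?R \<subseteq> {..M}" using assms(1) by blast
  then have "finite ?R" by (rule finite_subset) simp
  moreover have "M \<in> ?R" "0 \<in> ?R" using assms(2-5) by (metis image_eqI)+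
  ultimately have "Max ?R = M" "Min ?R = 0"
    using \<open>?R \<subseteq> {..M}\<close> by (auto intro: Max_eqI Min_eqI)
  then show ?thesis unfolding rank_capacity_def by simp
qed

lemma rank_capacity_hcat_mult:
  fixes P :: "nat \<Rightarrow> real mat"
  assumes P: "\<And>i. i < k \<Longrightarrow> P i \<in> carrier_mat m r" and "r \<le> c"
  shows "rank_capacity (\<lambda>Q. hcat m c k (\<lambda>i. P i * Q i)) {Q. \<forall>i<k. Q i \<in> carrier_mat r c}
    = mrank (hcat m r k P)"
proof -
  obtain E F :: "real mat" where E: "E \<in> carrier_mat r c" and F: "F \<in> carrier_mat c r"
    and EF: "E * F = 1\<^sub>m r"
    using right_invertible_mat_exists[OF \<open>r \<le> c\<close>] by blast
  have "P i * 0\<^sub>m r c = 0\<^sub>m m c" if "i < k" for i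
    using P[OF that] by simp
  then have "hcat m c k (\<lambda>i. P i * 0\<^sub>m r c) = hcat m c k (\<lambda>_. 0\<^sub>m m c)"
    by (rule hcat_cong)
  then have zero: "mrank (hcat m c k (\<lambda>i. P i * 0\<^sub>m r c)) = 0"
    by (simp add: hcat_zero mrank_zero)
  show ?thesis
  proof (rule rank_capacity_eqI[where \<theta>\<^sub>1 = "\<lambda>_. E" and \<theta>\<^sub>0 = "\<lambda>_. 0\<^sub>m r c"])
    show "mrank (hcat m c k (\<lambda>i. P i * Q i)) \<le> mrank (hcat m r k P)"
      if "Q \<in> {Q. \<forall>i<k. Q i \<in> carrier_mat r c}" for Q
    proof -
      have "Q i \<in> carrier_mat r c" if "i < k" for i using \<open>Q \<in> _\<close> that by simp
      with P show ?thesis unfolding mrank_hcat_eq_rank by (rule vec_space.rank_hcat_mult_le)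
    qed
    show "mrank (hcat m c k (\<lambda>i. P i * E)) = mrank (hcat m r k P)"
      unfolding mrank_hcat_eq_rank using P
      by (rule vec_space.rank_hcat_mult_right_invertible[where Y = "\<lambda>_. F"])
        (use E F EF in simp_all)
  qed (use E zero in simp_all)
qed

lemma mrank_le_mrank_hcat_factors:
  fixes W :: "real mat"
  assumes W: "W \<in> carrier_mat m (k * c)"
    and P: "\<And>i. i < k \<Longrightarrow> P i \<in> carrier_mat m r" and Q: "\<And>i. i < k \<Longrightarrow> Q i \<in> carrier_mat r c"
    and blocks: "\<And>i. i < k \<Longrightarrow> col_block W c i = P i * Q i"
  shows "mrank W \<le> mrank (hcat m r k P)"
proof -
  have "W = hcat m c k (col_block W c)" using hcat_col_block[OF W] by simp
  also have "\<dots> = hcat m c k (\<lambda>i. P i * Q i)" using blocks by (rule hcat_cong)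
  also have "mrank \<dots> \<le> mrank (hcat m r k P)"
    unfolding mrank_hcat_eq_rank using P Q by (rule vec_space.rank_hcat_mult_le)
  finally show ?thesis .
qed

lemma rank_capacity_vcat_mult_eq_transpose:
  fixes V :: "nat \<Rightarrow> real mat"
  assumes V: "\<And>j. j < k \<Longrightarrow> V j \<in> carrier_mat r n"
  shows "rank_capacity (\<lambda>U. vcat c n k (\<lambda>j. U j * V j)) {U. \<forall>j<k. U j \<in> carrier_mat c r}
    = rank_capacity (\<lambda>Q. hcat n c k (\<lambda>j. transpose_mat (V j) * Q j))
        {Q. \<forall>j<k. Q j \<in> carrier_mat r c}"
proof -
  let ?TU = "{U. \<forall>j<k. U j \<in> carrier_mat c r}" and ?TQ = "{Q. \<forall>j<k. Q j \<in> carrier_mat r c}"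
  have rank: "mrank (vcat c n k (\<lambda>j. U j * V j))
      = mrank (hcat n c k (\<lambda>j. transpose_mat (V j) * transpose_mat (U j)))"
    if "U \<in> ?TU" for U
  proof -
    have U: "U j \<in> carrier_mat c r" if "j < k" for j using \<open>U \<in> ?TU\<close> that by simp
    have "U j * V j \<in> carrier_mat c n" if "j < k" for j
      using U[OF that] V[OF that] by (rule mult_carrier_mat)
    then have "transpose_mat (vcat c n k (\<lambda>j. U j * V j))
        = hcat n c k (\<lambda>j. transpose_mat (U j * V j))"
      by (rule transpose_vcat)
    also have "\<dots> = hcat n c k (\<lambda>j. transpose_mat (V j) * transpose_mat (U j))"
      using transpose_mult[OF U V] by (rule hcat_cong)
    finally show ?thesis by (metis mrank_transpose)
  qed
  have transpose_params: "(\<lambda>U j. transpose_mat (U j)) ` ?TU = ?TQ"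
  proof (intro equalityI subsetI)
    fix Q assume "Q \<in> (\<lambda>U j. transpose_mat (U j)) ` ?TU"
    then show "Q \<in> ?TQ" by force
  next
    fix Q assume Q: "Q \<in> ?TQ"
    have "Q = (\<lambda>j. transpose_mat (transpose_mat (Q j)))" by simp
    moreover have "(\<lambda>j. transpose_mat (Q j)) \<in> ?TU" using Q by simp
    ultimately show "Q \<in> (\<lambda>U j. transpose_mat (U j)) ` ?TU" by (rule image_eqI)
  qed
  have "(\<lambda>U. mrank (vcat c n k (\<lambda>j. U j * V j))) ` ?TU
      = (\<lambda>U. mrank (hcat n c k (\<lambda>j. transpose_mat (V j) * transpose_mat (U j)))) ` ?TU"
    using rank by (rule image_cong[OF refl])
  also have "\<dots> = (\<lambda>Q. mrank (hcat n c k (\<lambda>j. transpose_mat (V j) * Q j))) ` ?TQ"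
    unfolding transpose_params[symmetric] image_image ..
  finally show ?thesis unfolding rank_capacity_def by simp
qed

lemma rank_capacity_col_sliced:
  fixes W :: "real mat" and P Q :: "nat \<Rightarrow> real mat"
  assumes W: "W \<in> carrier_mat m n" and W_full: "mrank W = min m n" and n: "n = c * k"
    and P: "\<And>i. i < k \<Longrightarrow> P i \<in> carrier_mat m (min m c)"
    and Q: "\<And>i. i < k \<Longrightarrow> Q i \<in> carrier_mat (min m c) c"
    and blocks: "\<And>i. i < k \<Longrightarrow> col_block W c i = P i * Q i"
  shows "rank_capacity (\<lambda>Qt. hcat m c k (\<lambda>i. P i * Qt i))
      {Qt. \<forall>i<k. Qt i \<in> carrier_mat (min m c) c} = mrank (hcat m (min m c) k P)"
    and "m \<le> n \<Longrightarrow> rank_capacity (\<lambda>Qt. hcat m c k (\<lambda>i. P i * Qt i))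
      {Qt. \<forall>i<k. Qt i \<in> carrier_mat (min m c) c} = m"
proof -
  show cap: "rank_capacity (\<lambda>Qt. hcat m c k (\<lambda>i. P i * Qt i))
      {Qt. \<forall>i<k. Qt i \<in> carrier_mat (min m c) c} = mrank (hcat m (min m c) k P)"
    using P min.cobounded2 by (rule rank_capacity_hcat_mult)
  assume "m \<le> n"
  have "W \<in> carrier_mat m (k * c)" using W n by (simp add: mult.commute)
  then have "mrank W \<le> mrank (hcat m (min m c) k P)"
    using P Q blocks by (rule mrank_le_mrank_hcat_factors)
  moreover have "mrank (hcat m (min m c) k P) \<le> m"
    using mrank_le_dim_row[of "hcat m (min m c) k P"] by (simp add: hcat_def)
  ultimately show "rank_capacity (\<lambda>Qt. hcat m c k (\<lambda>i. P i * Qt i))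
      {Qt. \<forall>i<k. Qt i \<in> carrier_mat (min m c) c} = m"
    using cap W_full \<open>m \<le> n\<close> by simp
qed

lemma rank_capacity_row_sliced:
  fixes W :: "real mat" and U V :: "nat \<Rightarrow> real mat"
  assumes W: "W \<in> carrier_mat m n" and W_full: "mrank W = min m n" and m: "m = c * k"
    and U: "\<And>j. j < k \<Longrightarrow> U j \<in> carrier_mat c (min c n)"
    and V: "\<And>j. j < k \<Longrightarrow> V j \<in> carrier_mat (min c n) n"
    and blocks: "\<And>j. j < k \<Longrightarrow> row_block W c j = U j * V j"
  shows "rank_capacity (\<lambda>Ut. vcat c n k (\<lambda>j. Ut j * V j))
      {Ut. \<forall>j<k. Ut j \<in> carrier_mat c (min c n)}
      = mrank (hcat n (min c n) k (\<lambda>j. transpose_mat (V j)))"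
    and "n \<le> m \<Longrightarrow> rank_capacity (\<lambda>Ut. vcat c n k (\<lambda>j. Ut j * V j))
      {Ut. \<forall>j<k. Ut j \<in> carrier_mat c (min c n)} = n"
proof -
  have WT: "transpose_mat W \<in> carrier_mat n m" and WT_full: "mrank (transpose_mat W) = min n m"
    using W W_full by (auto simp: mrank_transpose)
  have VT: "transpose_mat (V j) \<in> carrier_mat n (min n c)" if "j < k" for j
    using V[OF that] by (simp add: min.commute)
  have UT: "transpose_mat (U j) \<in> carrier_mat (min n c) c" if "j < k" for j
    using U[OF that] by (simp add: min.commute)
  have blocksT: "col_block (transpose_mat W) c j = transpose_mat (V j) * transpose_mat (U j)"
    if "j < k" for j
  proof -
    have "col_block (transpose_mat W) c j = transpose_mat (row_block W c j)"
      using transpose_row_block[of W k c n j] W m that by (simp add: mult.commute)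
    also have "\<dots> = transpose_mat (V j) * transpose_mat (U j)"
      using blocks[OF that] transpose_mult[OF U[OF that] V[OF that]] by simp
    finally show ?thesis .
  qed
  note col_sliced = rank_capacity_col_sliced[where W = "transpose_mat W" and m = n and n = m
      and P = "\<lambda>j. transpose_mat (V j)" and Q = "\<lambda>j. transpose_mat (U j)",
      OF WT WT_full m VT UT blocksT, unfolded min.commute[of n c]]
  show "rank_capacity (\<lambda>Ut. vcat c n k (\<lambda>j. Ut j * V j))
      {Ut. \<forall>j<k. Ut j \<in> carrier_mat c (min c n)}
      = mrank (hcat n (min c n) k (\<lambda>j. transpose_mat (V j)))"
    "n \<le> m \<Longrightarrow> rank_capacity (\<lambda>Ut. vcat c n k (\<lambda>j. Ut j * V j))
      {Ut. \<forall>j<k. Ut j \<in> carrier_mat c (min c n)} = n"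
    using rank_capacity_vcat_mult_eq_transpose[OF V] col_sliced by simp_all
qed

theorem lemma2:
  fixes W :: "real mat" and m n :: nat
  assumes W_dim: "W \<in> carrier_mat m n"
    and W_full: "mrank W = min m n"
  shows
    "(\<forall>n0 n1 (P :: nat \<Rightarrow> real mat) (Q :: nat \<Rightarrow> real mat).
        n = n0 * n1 \<and>
        (\<forall>i < n1. P i \<in> carrier_mat m (min m n0) \<and> Q i \<in> carrier_mat (min m n0) n0
                   \<and> col_block W n0 i = P i * Q i)
      \<longrightarrow>
        rank_capacity (\<lambda>Qt. hcat m n0 n1 (\<lambda>i. P i * Qt i))
          {Qt. \<forall>i < n1. Qt i \<in> carrier_mat (min m n0) n0}
          = mrank (hcat m (min m n0) n1 P)
      \<and> (m \<le> n \<longrightarrow>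
        rank_capacity (\<lambda>Qt. hcat m n0 n1 (\<lambda>i. P i * Qt i))
          {Qt. \<forall>i < n1. Qt i \<in> carrier_mat (min m n0) n0} = m))
   \<and>
    (\<forall>m0 m1 (U :: nat \<Rightarrow> real mat) (V :: nat \<Rightarrow> real mat).
        m = m0 * m1 \<and>
        (\<forall>j < m1. U j \<in> carrier_mat m0 (min m0 n) \<and> V j \<in> carrier_mat (min m0 n) n
                   \<and> row_block W m0 j = U j * V j)
      \<longrightarrow>
        rank_capacity (\<lambda>Ut. vcat m0 n m1 (\<lambda>j. Ut j * V j))
          {Ut. \<forall>j < m1. Ut j \<in> carrier_mat m0 (min m0 n)}
          = mrank (hcat n (min m0 n) m1 (\<lambda>j. transpose_mat (V j)))
      \<and> (n \<le> m \<longrightarrow>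
        rank_capacity (\<lambda>Ut. vcat m0 n m1 (\<lambda>j. Ut j * V j))
          {Ut. \<forall>j < m1. Ut j \<in> carrier_mat m0 (min m0 n)} = n))"
  by (intro conjI allI impI; elim conjE;
      rule rank_capacity_col_sliced[OF W_dim W_full] rank_capacity_row_sliced[OF W_dim W_full]; auto)

end
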